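(* Let $\mathcal G=(G,f,h)$ be a network dynamical system of size $N$ satisfying Assumptions 1 and 2, and for each $q\in[N]$ let $x^q(1)$ be the time-1 state from a $q$-pinching initial condition, $\phi_q\in\mathbb R^{P\times N}$, and $y^q(1)=\phi_q x^q(1)$. If for a given $q$ the problem $\min\|\tilde x\|_0$ subject to $\phi_q\tilde x=y^q(1)$ has $x^q(1)$ as its unique solution, then $L_1(q)$ is determined by $(\phi_q,y^q(1))$, namely $L_1(q)=\operatorname{supp}(x^q_* )\setminus\{q\}$ where $x^q_*$ is that unique solution. If this holds for every $q\in[N]$, then the adjacency matrix $A$ is uniquely determined by $\{(\phi_q,y^q(1))\}_{q=1}^N$ via $A_{ij}=1$ iff $i\neq j$ and $i\in\operatorname{supp}(x^j_* )$.
   Context: Let $G$ be a directed graph on vertex set $[N]=\{1,\dots,N\}$ without self-loops, with adjacency matrix $A\in\{0,1\}^{N\times N}$, where $A_{ij}=1$ if and only if $i$ receives an edge (input) from $j$; in particular $A_{ii}=0$. The first-level set of $q$ is $L_1(q)=\{i\in[N]: A_{iq}=1\}$. The network dynamical system $\mathcal G=(G,f,h)$ is the discrete-time system $x_i(t+1)=f_i(x_i(t))+\sum_{j=1}^N A_{ij}h_{ij}(x_i(t),x_j(t))$ for $i\in[N]$, $t=0,1,2,\dots$, where $f_i:\mathbb R\to\mathbb R$ and $h_{ij}:\mathbb R\times\mathbb R\to\mathbb R$. Assumption 1: $f_i(0)=0$ for all $i\in[N]$. Assumption 2: there is $\delta>0$ such that for all $i,j\in[N]$, $h_{ij}(0,0)=0$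 and $h_{ij}(0,v)\neq 0$ for every $v$ with $0<|v|<\delta$. For $q\in[N]$, a $q$-pinching initial condition is $x^q(0)$ with $x^q_i(0)=\epsilon_q\delta_{iq}$ (Kronecker delta), where $0<|\epsilon_q|<\delta$; $x^q(t)$ denotes the resulting trajectory. For $x\in\mathbb R^N$, $\operatorname{supp}(x)=\{i: x_i\neq0\}$ and $\|x\|_0=\#\operatorname{supp}(x)$. *)

theory Defs
  imports "HOL-Analysis.Analysis"
begin

text \<open>Vertices are the elements of a finite type 'n (so N = CARD('n)).
  The adjacency relation A i j means A_ij = 1, i.e. i receives an input from j.
  States are vectors in real^'n.\<close>

definition nds_step ::
  "('n::finite \<Rightarrow> real \<Rightarrow> real) \<Rightarrow> ('n \<Rightarrow> 'n \<Rightarrow> real \<Rightarrow> real \<Rightarrow> real)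
    \<Rightarrow> ('n \<Rightarrow> 'n \<Rightarrow> bool) \<Rightarrow> real^'n \<Rightarrow> real^'n" where
  "nds_step f h A x =
     (\<chi> i. f i (x $ i) + (\<Sum>j\<in>UNIV. (if A i j then 1 else 0) * h i j (x $ i) (x $ j)))"

primrec nds_traj ::
  "('n::finite \<Rightarrow> real \<Rightarrow> real) \<Rightarrow> ('n \<Rightarrow> 'n \<Rightarrow> real \<Rightarrow> real \<Rightarrow> real)
    \<Rightarrow> ('n \<Rightarrow> 'n \<Rightarrow> bool) \<Rightarrow> real^'n \<Rightarrow> nat \<Rightarrow> real^'n" where
  "nds_traj f h A x0 0 = x0"
| "nds_traj f h A x0 (Suc t) = nds_step f h A (nds_traj f h A x0 t)"

definition first_level :: "('n \<Rightarrow> 'n \<Rightarrow> bool) \<Rightarrow> 'n \<Rightarrow> 'n set" where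
  "first_level A q = {i. A i q}"

definition pinching :: "'n::finite \<Rightarrow> real \<Rightarrow> real^'n" where
  "pinching q \<epsilon> = (\<chi> i. if i = q then \<epsilon> else 0)"

definition vsupp :: "real^'n::finite \<Rightarrow> 'n set" where
  "vsupp x = {i. x $ i \<noteq> 0}"

definition l0norm :: "real^'n::finite \<Rightarrow> nat" where
  "l0norm x = card (vsupp x)"

definition l0_solutions :: "real^'n::finite^'p::finite \<Rightarrow> real^'p \<Rightarrow> (real^'n) set" where
  "l0_solutions Phi y =
     {x. Phi *v x = y \<and> (\<forall>x'. Phi *v x' = y \<longrightarrow> l0norm x \<le> l0norm x')}"

end

theory Submission
  imports Defs
begin

text \<open>Starting from a pinching at q, only the coupling terms h i q 0 e can be nonzero at
  time 1 off the vertex q, and Assumption 2 makes h i q 0 e nonzero exactly when the edge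
  q to i is present. Hence the support of x^q(1) away from q is the first-level set of q,
  and a unique l0-minimiser recovers x^q(1) and with it the q-th column of A.\<close>

lemma nds_step_pinching_nth:
  assumes "\<And>i. f i 0 = 0" and "\<And>i j. h i j 0 0 = 0" and "i \<noteq> q"
  shows "nds_step f h A (pinching q e) $ i = (if A i q then h i q 0 e else 0)"
proof -
  have "nds_step f h A (pinching q e) $ i
      = (\<Sum>j\<in>UNIV. (if A i j then 1 else 0) * h i j 0 (if j = q then e else 0))"
    using assms by (simp add: nds_step_def pinching_def)
  also have "\<dots> = (if A i q then 1 else 0) * h i q 0 e"
    by (subst sum.remove[of _ q]) (auto simp: assms(2) intro!: sum.neutral)
  finally show ?thesis by simp
qed

lemma vsupp_first_step_pinching:
  assumes "\<And>i. f i 0 = 0" and "\<And>i j. h i j 0 0 = 0"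
    and "\<And>i j v. 0 < \<bar>v\<bar> \<Longrightarrow> \<bar>v\<bar> < \<delta> \<Longrightarrow> h i j 0 v \<noteq> 0"
    and "0 < \<bar>e\<bar>" "\<bar>e\<bar> < \<delta>"
  shows "vsupp (nds_traj f h A (pinching q e) 1) - {q} = first_level A q - {q}"
proof -
  have "nds_traj f h A (pinching q e) 1 $ i \<noteq> 0 \<longleftrightarrow> A i q" if "i \<noteq> q" for i
    using nds_step_pinching_nth[where f = f and h = h, OF assms(1,2) that] assms(3-5)
    by simp
  then show ?thesis
    by (auto simp: vsupp_def first_level_def)
qed

lemma first_level_eq_vsupp_l0_solution:
  assumes "\<And>i. \<not> A i i" and "\<And>i. f i 0 = 0" and "\<And>i j. h i j 0 0 = 0"
    and "\<And>i j v. 0 < \<bar>v\<bar> \<Longrightarrow> \<bar>v\<bar> < \<delta> \<Longrightarrow> h i j 0 v \<noteq> 0"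
    and "0 < \<bar>e\<bar>" "\<bar>e\<bar> < \<delta>"
    and "l0_solutions Phi (Phi *v nds_traj f h A (pinching q e) 1)
           = {nds_traj f h A (pinching q e) 1}"
  shows "first_level A q = vsupp (THE x. x \<in> l0_solutions Phi (Phi *v nds_traj f h A (pinching q e) 1)) - {q}"
proof -
  have "first_level A q = first_level A q - {q}"
    using assms(1) by (auto simp: first_level_def)
  also have "\<dots> = vsupp (nds_traj f h A (pinching q e) 1) - {q}"
    using vsupp_first_step_pinching[where f = f and h = h, OF assms(2-6)] by simp
  finally show ?thesis
    using assms(7) by simp
qed

theorem mainTheorem8:
  fixes A :: "'n::finite \<Rightarrow> 'n \<Rightarrow> bool"
    and f :: "'n \<Rightarrow> real \<Rightarrow> real"
    and h :: "'n \<Rightarrow> 'n \<Rightarrow> real \<Rightarrow> real \<Rightarrow> real"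
    and \<delta> :: real
    and \<epsilon> :: "'n \<Rightarrow> real"
    and \<phi> :: "'n \<Rightarrow> real^'n^'p::finite"
  assumes no_loops: "\<And>i. \<not> A i i"
    and assm1: "\<And>i. f i 0 = 0"
    and delta_pos: "\<delta> > 0"
    and assm2a: "\<And>i j. h i j 0 0 = 0"
    and assm2b: "\<And>i j v. 0 < \<bar>v\<bar> \<Longrightarrow> \<bar>v\<bar> < \<delta> \<Longrightarrow> h i j 0 v \<noteq> 0"
    and eps: "\<And>q. 0 < \<bar>\<epsilon> q\<bar> \<and> \<bar>\<epsilon> q\<bar> < \<delta>"
  shows "(\<forall>q. l0_solutions (\<phi> q) (\<phi> q *v nds_traj f h A (pinching q (\<epsilon> q)) 1)
                 = {nds_traj f h A (pinching q (\<epsilon> q)) 1}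
            \<longrightarrow> first_level A q
                 = vsupp (THE x. x \<in> l0_solutions (\<phi> q) (\<phi> q *v nds_traj f h A (pinching q (\<epsilon> q)) 1)) - {q})
       \<and> ((\<forall>q. l0_solutions (\<phi> q) (\<phi> q *v nds_traj f h A (pinching q (\<epsilon> q)) 1)
                 = {nds_traj f h A (pinching q (\<epsilon> q)) 1})
          \<longrightarrow> (\<forall>i j. A i j \<longleftrightarrow>
                 i \<noteq> j \<and> i \<in> vsupp (THE x. x \<in> l0_solutions (\<phi> j) (\<phi> j *v nds_traj f h A (pinching j (\<epsilon> j)) 1))))"
proof -
  have column: "first_level A q
      = vsupp (THE x. x \<in> l0_solutions (\<phi> q) (\<phi> q *v nds_traj f h A (pinching q (\<epsilon> q)) 1)) - {q}"
    if "l0_solutions (\<phi> q) (\<phi> q *v nds_traj f h A (pinching q (\<epsilon> q)) 1)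
          = {nds_traj f h A (pinching q (\<epsilon> q)) 1}" for q
    using first_level_eq_vsupp_l0_solution[where f = f and h = h, OF no_loops assm1 assm2a assm2b _ _ that] eps
    by blast
  show ?thesis
    using column by (auto simp: first_level_def set_eq_iff)
qed

end
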